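(* Let $p$ be a prime and let $R$ be the ring whose additive group is $\mathbb{Z}_{p^2}\oplus\mathbb{Z}_p\oplus\mathbb{Z}_p$ with basis $\{1,t,y\}$ (elements $r+st+hy$ with $r\in\mathbb{Z}_{p^2}$, $s,h\in\mathbb{Z}_p$), $1$ the identity, and multiplication determined by $t^2=0$, $y^2=y$, $ty=0$, $yt=t$. Then the pair $(1-t-y,\,t)\in R^2$ is not unimodular, the cyclic submodule $R(1-t-y,t)$ is free, and $(1-t-y,t)$ is an outlier.
   Context: $R^2$ is the free left $R$-module of pairs; $R(a,b)=\{(\alpha a,\alpha b):\alpha\in R\}$ is free if $r(a,b)=(0,0)$ implies $r=0$. A pair $(a,b)$ is (right) unimodular if there exist $x,y\in R$ with $ax+by=1$; it is an outlier if there are no $r\in R$ and unimodular $(x,y)\in R^2$ with $(a,b)=r(x,y)$. *)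

theory Defs
  imports "HOL-Algebra.Ring" "HOL-Computational_Algebra.Primes"
begin

definition unimodular :: "('a, 'm) ring_scheme \<Rightarrow> 'a \<Rightarrow> 'a \<Rightarrow> bool" where
  "unimodular R a b \<longleftrightarrow>
     (\<exists>x\<in>carrier R. \<exists>y\<in>carrier R. a \<otimes>\<^bsub>R\<^esub> x \<oplus>\<^bsub>R\<^esub> b \<otimes>\<^bsub>R\<^esub> y = \<one>\<^bsub>R\<^esub>)"

definition cyclic_free :: "('a, 'm) ring_scheme \<Rightarrow> 'a \<Rightarrow> 'a \<Rightarrow> bool" where
  "cyclic_free R a b \<longleftrightarrow>
     (\<forall>r\<in>carrier R. r \<otimes>\<^bsub>R\<^esub> a = \<zero>\<^bsub>R\<^esub> \<and> r \<otimes>\<^bsub>R\<^esub> b = \<zero>\<^bsub>R\<^esub> \<longrightarrow> r = \<zero>\<^bsub>R\<^esub>)"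

definition outlier :: "('a, 'm) ring_scheme \<Rightarrow> 'a \<Rightarrow> 'a \<Rightarrow> bool" where
  "outlier R a b \<longleftrightarrow>
     \<not> (\<exists>r\<in>carrier R. \<exists>x\<in>carrier R. \<exists>y\<in>carrier R.
           unimodular R x y \<and> a = r \<otimes>\<^bsub>R\<^esub> x \<and> b = r \<otimes>\<^bsub>R\<^esub> y)"

text \<open>The ring R_p: elements r + s t + h y encoded as integer triples (r,s,h) with
  0 \<le> r < p^2, 0 \<le> s,h < p. Multiplication from t^2 = 0, y^2 = y, ty = 0, yt = t:
  (r+st+hy)(r'+s't+h'y) = rr' + (rs' + sr' + hs') t + (rh' + hr' + hh') y.\<close>

definition Rp :: "int \<Rightarrow> (int \<times> int \<times> int) ring" where
  "Rp p = \<lparr> partial_object.carrier = {(r, s, h). 0 \<le> r \<and> r < p^2 \<and> 0 \<le> s \<and> s < p \<and> 0 \<le> h \<and> h < p},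
            monoid.mult = (\<lambda>(r, s, h) (r', s', h').
                      ((r * r') mod p^2, (r * s' + s * r' + h * s') mod p, (r * h' + h * r' + h * h') mod p)),
            monoid.one = (1, 0, 0),
            ring.zero = (0, 0, 0),
            ring.add = (\<lambda>(r, s, h) (r', s', h'). ((r + r') mod p^2, (s + s') mod p, (h + h') mod p)) \<rparr>"

definition Rp_t :: "int \<times> int \<times> int" where "Rp_t = (0, 1, 0)"
definition Rp_y :: "int \<times> int \<times> int" where "Rp_y = (0, 0, 1)"

end

theory Submission
  imports Defs "HOL-Number_Theory.Residues"
begin

text \<open>The augmentation \<open>r + s t + h y \<mapsto> r + h (mod p)\<close> is a ring homomorphism
  \<open>R \<rightarrow> \<int>/p\<close> (it sends \<open>t \<mapsto> 0\<close>, \<open>y \<mapsto> 1\<close>) whose kernel is a proper ideal containing both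
  \<open>a = 1 - t - y\<close> and \<open>t\<close>; hence \<open>(a, t)\<close> is not unimodular. If \<open>(a, t) = r (x, w)\<close> with
  \<open>(x, w)\<close> unimodular, then \<open>r\<close> lies in that kernel too. Comparing \<open>\<int>/p\<^sup>2\<close>-coordinates,
  \<open>r x = a\<close> makes the coordinate of \<open>r\<close> a unit, so \<open>r w = t\<close> forces \<open>w \<in> \<int>/p t + \<int>/p y\<close>;
  but kernel elements annihilate all such \<open>w\<close>, contradicting \<open>t \<noteq> 0\<close>. Freeness: \<open>r t\<close> and
  \<open>r y\<close> both carry the augmentation of \<open>r\<close>, so \<open>r t = 0\<close> gives \<open>r y = 0\<close> and
  \<open>r = r a + r t + r y\<close>. Primality of \<open>p\<close> is only used through \<open>p > 1\<close>.\<close>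

lemma not_unimodular_in_proper_ideal:
  assumes "ring R" "ideal I R" "I \<noteq> carrier R" "a \<in> I" "b \<in> I"
  shows "\<not> unimodular R a b"
proof
  interpret I: ideal I R by fact
  assume "unimodular R a b"
  then obtain x y where xy: "x \<in> carrier R" "y \<in> carrier R" and one: "a \<otimes>\<^bsub>R\<^esub> x \<oplus>\<^bsub>R\<^esub> b \<otimes>\<^bsub>R\<^esub> y = \<one>\<^bsub>R\<^esub>"
    unfolding unimodular_def by blast
  have "a \<otimes>\<^bsub>R\<^esub> x \<oplus>\<^bsub>R\<^esub> b \<otimes>\<^bsub>R\<^esub> y \<in> I"
    using assms(4,5) xy by (simp add: I.I_r_closed I.a_closed)
  then have "\<one>\<^bsub>R\<^esub> \<in> I"
    by (simp only: one)
  then show False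
    using I.one_imp_carrier assms(3) by blast
qed

lemma unimodular_left_factor_in_ideal:
  assumes "ring R" "ideal I R" "unimodular R x y"
    and "r \<in> carrier R" "x \<in> carrier R" "y \<in> carrier R"
    and "r \<otimes>\<^bsub>R\<^esub> x \<in> I" "r \<otimes>\<^bsub>R\<^esub> y \<in> I"
  shows "r \<in> I"
proof -
  interpret R: ring R by fact
  interpret I: ideal I R by fact
  obtain u v where uv: "u \<in> carrier R" "v \<in> carrier R" "x \<otimes>\<^bsub>R\<^esub> u \<oplus>\<^bsub>R\<^esub> y \<otimes>\<^bsub>R\<^esub> v = \<one>\<^bsub>R\<^esub>"
    using assms(3) unfolding unimodular_def by blast
  have "r = r \<otimes>\<^bsub>R\<^esub> \<one>\<^bsub>R\<^esub>"
    using assms(4) by simp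
  also have "\<dots> = r \<otimes>\<^bsub>R\<^esub> (x \<otimes>\<^bsub>R\<^esub> u \<oplus>\<^bsub>R\<^esub> y \<otimes>\<^bsub>R\<^esub> v)"
    by (simp only: uv(3))
  also have "\<dots> = r \<otimes>\<^bsub>R\<^esub> x \<otimes>\<^bsub>R\<^esub> u \<oplus>\<^bsub>R\<^esub> r \<otimes>\<^bsub>R\<^esub> y \<otimes>\<^bsub>R\<^esub> v"
    using uv(1,2) assms(4-6) by (simp add: R.r_distr R.m_assoc)
  also have "\<dots> \<in> I"
    using uv(1,2) assms(7,8) by (simp add: I.I_r_closed I.a_closed)
  finally show ?thesis .
qed

lemma mod_eq_0_cancel_left:
  fixes r x w m :: int
  assumes "(r * x) mod m = 1" "(r * w) mod m = 0"
  shows "w mod m = 0"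
proof -
  have "w mod m = (w * ((r * x) mod m)) mod m"
    using assms(1) by simp
  also have "\<dots> = (x * ((r * w) mod m)) mod m"
    by (simp add: mod_simps ac_simps)
  finally show ?thesis
    using assms(2) by simp
qed

lemma mod_eq_of_dvd_diff: "(m::int) dvd a - b \<Longrightarrow> a mod m = b mod m"
  by (simp add: mod_eq_dvd_iff)

text \<open>Identities between residues modulo \<open>p\<close> and \<open>p\<^sup>2\<close> are checked by writing each residue
  as \<open>x - m * (x div m)\<close> and letting Groebner bases find the multiple of the modulus.\<close>

lemmas mod_as_div =
  minus_mult_div_eq_mod[symmetric, of _ p] minus_mult_div_eq_mod[symmetric, of _ "p^2"] dvd_def
  for p :: int

lemma Rp_mult_assoc:
  "x \<otimes>\<^bsub>Rp p\<^esub> y \<otimes>\<^bsub>Rp p\<^esub> z = x \<otimes>\<^bsub>Rp p\<^esub> (y \<otimes>\<^bsub>Rp p\<^esub> z)"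
proof -
  obtain x1 x2 x3 y1 y2 y3 z1 z2 z3 where xyz: "x = (x1, x2, x3)" "y = (y1, y2, y3)" "z = (z1, z2, z3)"
    by (metis prod_cases3)
  show ?thesis
    unfolding xyz by (simp add: Rp_def; intro conjI; rule mod_eq_of_dvd_diff;
        unfold mod_as_div power2_eq_square; Groebner_Basis.algebra)
qed

lemma Rp_l_distr:
  "(x \<oplus>\<^bsub>Rp p\<^esub> y) \<otimes>\<^bsub>Rp p\<^esub> z = x \<otimes>\<^bsub>Rp p\<^esub> z \<oplus>\<^bsub>Rp p\<^esub> y \<otimes>\<^bsub>Rp p\<^esub> z"
proof -
  obtain x1 x2 x3 y1 y2 y3 z1 z2 z3 where xyz: "x = (x1, x2, x3)" "y = (y1, y2, y3)" "z = (z1, z2, z3)"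
    by (metis prod_cases3)
  show ?thesis
    unfolding xyz by (simp add: Rp_def; intro conjI; rule mod_eq_of_dvd_diff;
        unfold mod_as_div power2_eq_square; Groebner_Basis.algebra)
qed

lemma Rp_r_distr:
  "z \<otimes>\<^bsub>Rp p\<^esub> (x \<oplus>\<^bsub>Rp p\<^esub> y) = z \<otimes>\<^bsub>Rp p\<^esub> x \<oplus>\<^bsub>Rp p\<^esub> z \<otimes>\<^bsub>Rp p\<^esub> y"
proof -
  obtain x1 x2 x3 y1 y2 y3 z1 z2 z3 where xyz: "x = (x1, x2, x3)" "y = (y1, y2, y3)" "z = (z1, z2, z3)"
    by (metis prod_cases3)
  show ?thesis
    unfolding xyz by (simp add: Rp_def; intro conjI; rule mod_eq_of_dvd_diff;
        unfold mod_as_div power2_eq_square; Groebner_Basis.algebra)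
qed

lemma Rp_ring:
  assumes "p > 1"
  shows "ring (Rp p)"
proof (rule ringI)
  have "p\<^sup>2 > 0"
    using assms by simp
  show "abelian_group (Rp p)"
  proof (rule abelian_groupI)
    fix x
    assume "x \<in> carrier (Rp p)"
    then obtain r s h where x: "x = (r, s, h)" "0 \<le> r" "r < p\<^sup>2" "0 \<le> s" "s < p" "0 \<le> h" "h < p"
      by (auto simp: Rp_def)
    show "\<exists>y\<in>carrier (Rp p). y \<oplus>\<^bsub>Rp p\<^esub> x = \<zero>\<^bsub>Rp p\<^esub>"
      by (rule bexI[of _ "((- r) mod p\<^sup>2, (- s) mod p, (- h) mod p)"])
         (use x \<open>p\<^sup>2 > 0\<close> in \<open>auto simp: Rp_def mod_simps\<close>)
  qed (use assms \<open>p\<^sup>2 > 0\<close> in \<open>auto simp: Rp_def mod_simps ac_simps\<close>)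
  show "monoid (Rp p)"
  proof (rule monoidI)
    show "x \<otimes>\<^bsub>Rp p\<^esub> y \<otimes>\<^bsub>Rp p\<^esub> z = x \<otimes>\<^bsub>Rp p\<^esub> (y \<otimes>\<^bsub>Rp p\<^esub> z)" for x y z
      by (rule Rp_mult_assoc)
  qed (use assms \<open>p\<^sup>2 > 0\<close> in \<open>auto simp: Rp_def\<close>)
qed (simp_all add: Rp_l_distr Rp_r_distr)

lemma Rp_zero_eq: "\<zero>\<^bsub>Rp p\<^esub> = (0, 0, 0)"
  by (simp add: Rp_def)

lemma Rp_t_carrier: "p > 1 \<Longrightarrow> Rp_t \<in> carrier (Rp p)"
  and Rp_y_carrier: "p > 1 \<Longrightarrow> Rp_y \<in> carrier (Rp p)"
  by (simp_all add: Rp_def Rp_t_def Rp_y_def)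

lemma Rp_fst_mult: "fst (x \<otimes>\<^bsub>Rp p\<^esub> y) = (fst x * fst y) mod p\<^sup>2"
  by (simp add: Rp_def split: prod.split)

definition Rp_aug :: "int \<Rightarrow> int \<times> int \<times> int \<Rightarrow> int" where
  "Rp_aug p = (\<lambda>(r, s, h). (r + h) mod p)"

lemma Rp_aug_ring_hom:
  assumes "p > 1"
  shows "Rp_aug p \<in> ring_hom (Rp p) (residue_ring p)"
proof (rule ring_hom_memI)
  fix x y :: "int \<times> int \<times> int"
  obtain x1 x2 x3 y1 y2 y3 where xy: "x = (x1, x2, x3)" "y = (y1, y2, y3)"
    by (metis prod_cases3)
  show "Rp_aug p (x \<otimes>\<^bsub>Rp p\<^esub> y) = Rp_aug p x \<otimes>\<^bsub>residue_ring p\<^esub> Rp_aug p y"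
    unfolding xy by (simp add: Rp_def Rp_aug_def residue_ring_def; rule mod_eq_of_dvd_diff;
        unfold mod_as_div power2_eq_square; Groebner_Basis.algebra)
  show "Rp_aug p (x \<oplus>\<^bsub>Rp p\<^esub> y) = Rp_aug p x \<oplus>\<^bsub>residue_ring p\<^esub> Rp_aug p y"
    unfolding xy by (simp add: Rp_def Rp_aug_def residue_ring_def; rule mod_eq_of_dvd_diff;
        unfold mod_as_div power2_eq_square; Groebner_Basis.algebra)
qed (use assms in \<open>auto simp: Rp_def Rp_aug_def residue_ring_def\<close>)

lemma Rp_mult_t: "x \<otimes>\<^bsub>Rp p\<^esub> Rp_t = (0, Rp_aug p x, 0)"
  by (simp add: Rp_def Rp_aug_def Rp_t_def split: prod.split)

lemma Rp_mult_y: "x \<otimes>\<^bsub>Rp p\<^esub> Rp_y = (0, 0, Rp_aug p x)"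
  by (simp add: Rp_def Rp_aug_def Rp_y_def split: prod.split)

lemma Rp_mult_eq_zero_if_aug_zero:
  assumes "Rp_aug p x = 0" "fst w = 0"
  shows "x \<otimes>\<^bsub>Rp p\<^esub> w = \<zero>\<^bsub>Rp p\<^esub>"
proof -
  obtain r s h where x: "x = (r, s, h)"
    by (metis prod_cases3)
  obtain s' h' where w: "w = (0, s', h')"
    using assms(2) by (metis prod_cases3 fst_conv)
  have "(r + h) mod p = 0"
    using assms(1) by (simp add: Rp_aug_def x)
  then have "((r + h) * s') mod p = 0" "((r + h) * h') mod p = 0"
    by (simp_all add: mod_mult_left_eq[symmetric])
  then show ?thesis
    by (simp add: Rp_def x w algebra_simps)
qed

lemma Rp_one_minus_t_minus_y:
  assumes "p > 1"
  shows "\<one>\<^bsub>Rp p\<^esub> \<ominus>\<^bsub>Rp p\<^esub> Rp_t \<ominus>\<^bsub>Rp p\<^esub> Rp_y = (1, p - 1, p - 1)"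
proof -
  interpret R: ring "Rp p"
    using Rp_ring[OF assms] .
  have "p\<^sup>2 > 1"
    using assms by (simp add: power2_eq_square less_1_mult)
  have "\<ominus>\<^bsub>Rp p\<^esub> Rp_t = (0, p - 1, 0)" "\<ominus>\<^bsub>Rp p\<^esub> Rp_y = (0, 0, p - 1)"
    by (rule R.minus_equality; use assms \<open>p\<^sup>2 > 1\<close> in \<open>simp add: Rp_def Rp_t_def Rp_y_def\<close>)+
  then show ?thesis
    using assms \<open>p\<^sup>2 > 1\<close> by (simp add: a_minus_def) (simp add: Rp_def zmod_minus1)
qed

definition Rp_aug_kernel :: "int \<Rightarrow> (int \<times> int \<times> int) set" where
  "Rp_aug_kernel p = {x \<in> carrier (Rp p). Rp_aug p x = 0}"

lemma Rp_aug_kernel_ideal: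
  assumes "p > 1"
  shows "ideal (Rp_aug_kernel p) (Rp p)"
proof -
  have "ring (residue_ring p)"
    using residues.cring[OF residues.intro[OF assms]] cring.axioms(1) by blast
  then have "ring_hom_ring (Rp p) (residue_ring p) (Rp_aug p)"
    using ring_hom_ringI2 Rp_ring Rp_aug_ring_hom assms by blast
  then show ?thesis
    using ring_hom_ring.kernel_is_ideal
    by (fastforce simp: Rp_aug_kernel_def a_kernel_def' residue_ring_def)
qed

lemma Rp_aug_kernel_proper:
  assumes "p > 1"
  shows "Rp_aug_kernel p \<noteq> carrier (Rp p)"
proof -
  have "\<one>\<^bsub>Rp p\<^esub> \<notin> Rp_aug_kernel p"
    using assms by (simp add: Rp_aug_kernel_def Rp_def Rp_aug_def)
  then show ?thesis
    using Rp_ring[OF assms] ring.is_monoid monoid.one_closed by blast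
qed

lemma Rp_t_in_aug_kernel: "p > 1 \<Longrightarrow> Rp_t \<in> Rp_aug_kernel p"
  by (simp add: Rp_aug_kernel_def Rp_def Rp_aug_def Rp_t_def)

lemma Rp_one_minus_t_minus_y_in_aug_kernel:
  assumes "p > 1"
  shows "\<one>\<^bsub>Rp p\<^esub> \<ominus>\<^bsub>Rp p\<^esub> Rp_t \<ominus>\<^bsub>Rp p\<^esub> Rp_y \<in> Rp_aug_kernel p"
proof -
  have "p\<^sup>2 > 1"
    using assms by (simp add: power2_eq_square less_1_mult)
  then show ?thesis
    unfolding Rp_one_minus_t_minus_y[OF assms] using assms
    by (simp add: Rp_aug_kernel_def Rp_def Rp_aug_def)
qed

lemma Rp_not_unimodular:
  assumes "p > 1"
  shows "\<not> unimodular (Rp p) (\<one>\<^bsub>Rp p\<^esub> \<ominus>\<^bsub>Rp p\<^esub> Rp_t \<ominus>\<^bsub>Rp p\<^esub> Rp_y) Rp_t"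
  by (rule not_unimodular_in_proper_ideal[OF Rp_ring[OF assms] Rp_aug_kernel_ideal[OF assms]
        Rp_aug_kernel_proper[OF assms] Rp_one_minus_t_minus_y_in_aug_kernel[OF assms]
        Rp_t_in_aug_kernel[OF assms]])

lemma Rp_cyclic_free:
  assumes "p > 1"
  shows "cyclic_free (Rp p) (\<one>\<^bsub>Rp p\<^esub> \<ominus>\<^bsub>Rp p\<^esub> Rp_t \<ominus>\<^bsub>Rp p\<^esub> Rp_y) Rp_t"
  unfolding cyclic_free_def
proof (intro ballI impI)
  interpret R: ring "Rp p"
    using Rp_ring[OF assms] .
  let ?a = "\<one>\<^bsub>Rp p\<^esub> \<ominus>\<^bsub>Rp p\<^esub> Rp_t \<ominus>\<^bsub>Rp p\<^esub> Rp_y"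
  fix r
  assume r: "r \<in> carrier (Rp p)"
    and ann: "r \<otimes>\<^bsub>Rp p\<^esub> ?a = \<zero>\<^bsub>Rp p\<^esub> \<and> r \<otimes>\<^bsub>Rp p\<^esub> Rp_t = \<zero>\<^bsub>Rp p\<^esub>"
  note t = Rp_t_carrier[OF assms] and y = Rp_y_carrier[OF assms]
  have "Rp_aug p r = 0"
    using ann by (simp add: Rp_mult_t Rp_zero_eq)
  then have "r \<otimes>\<^bsub>Rp p\<^esub> Rp_y = \<zero>\<^bsub>Rp p\<^esub>"
    by (simp add: Rp_mult_y Rp_zero_eq)
  have "r = r \<otimes>\<^bsub>Rp p\<^esub> ?a"
    using r t y ann \<open>r \<otimes>\<^bsub>Rp p\<^esub> Rp_y = \<zero>\<^bsub>Rp p\<^esub>\<close>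
    by (simp add: R.minus_eq R.r_distr R.r_minus)
  then show "r = \<zero>\<^bsub>Rp p\<^esub>"
    using ann by simp
qed

lemma Rp_outlier:
  assumes "p > 1"
  shows "outlier (Rp p) (\<one>\<^bsub>Rp p\<^esub> \<ominus>\<^bsub>Rp p\<^esub> Rp_t \<ominus>\<^bsub>Rp p\<^esub> Rp_y) Rp_t"
  unfolding outlier_def
proof clarify
  let ?a = "\<one>\<^bsub>Rp p\<^esub> \<ominus>\<^bsub>Rp p\<^esub> Rp_t \<ominus>\<^bsub>Rp p\<^esub> Rp_y"
  fix r x w
  assume carrier: "r \<in> carrier (Rp p)" "x \<in> carrier (Rp p)" "w \<in> carrier (Rp p)"
    and "unimodular (Rp p) x w"
    and a: "?a = r \<otimes>\<^bsub>Rp p\<^esub> x" and t: "Rp_t = r \<otimes>\<^bsub>Rp p\<^esub> w"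
  have "r \<otimes>\<^bsub>Rp p\<^esub> x \<in> Rp_aug_kernel p" "r \<otimes>\<^bsub>Rp p\<^esub> w \<in> Rp_aug_kernel p"
    using Rp_one_minus_t_minus_y_in_aug_kernel[OF assms] Rp_t_in_aug_kernel[OF assms] a t
    by simp_all
  then have "r \<in> Rp_aug_kernel p"
    by (rule unimodular_left_factor_in_ideal[OF Rp_ring[OF assms] Rp_aug_kernel_ideal[OF assms]
          \<open>unimodular (Rp p) x w\<close> carrier])
  have "r \<otimes>\<^bsub>Rp p\<^esub> x = (1, p - 1, p - 1)" "r \<otimes>\<^bsub>Rp p\<^esub> w = (0, 1, 0)"
    using a t Rp_one_minus_t_minus_y[OF assms] by (simp_all add: Rp_t_def)
  then have "(fst r * fst x) mod p\<^sup>2 = 1" "(fst r * fst w) mod p\<^sup>2 = 0"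
    by (simp_all flip: Rp_fst_mult)
  then have "fst w mod p\<^sup>2 = 0"
    by (rule mod_eq_0_cancel_left)
  moreover have "fst w mod p\<^sup>2 = fst w"
    using carrier(3) by (auto simp: Rp_def)
  ultimately have "fst w = 0"
    by simp
  then have "Rp_t = \<zero>\<^bsub>Rp p\<^esub>"
    using t \<open>r \<in> Rp_aug_kernel p\<close> Rp_mult_eq_zero_if_aug_zero by (simp add: Rp_aug_kernel_def)
  then show False
    by (simp add: Rp_t_def Rp_zero_eq)
qed

theorem mainTheorem15:
  fixes p :: int
  assumes "prime p"
  defines "R \<equiv> Rp p"
  defines "a \<equiv> \<one>\<^bsub>R\<^esub> \<ominus>\<^bsub>R\<^esub> Rp_t \<ominus>\<^bsub>R\<^esub> Rp_y"
  shows "ring R \<and> \<not> unimodular R a Rp_t \<and> cyclic_free R a Rp_t \<and> outlier R a Rp_t"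
proof -
  have "p > 1"
    using assms(1) prime_gt_1_int by blast
  then show ?thesis
    unfolding R_def a_def using Rp_ring Rp_not_unimodular Rp_cyclic_free Rp_outlier by blast
qed

end
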